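(* Let $p$ be a prime, $m\ge 1$ and $r$ integers with $r^p\equiv 1 \pmod m$, and let $G=\langle x, y\mid x^p=y^m=1,\ x^{-1}yx=y^r\rangle$ (so $G\cong C_p\ltimes C_m$ and $|G|=pm$). Assume that $p$ is the smallest prime divisor of $|G|$ and that $\gcd(p(r-1), m)=1$. Then $\mathsf d(G)=m+p-2$.
   Context: A sequence over a finite multiplicatively written group $G$ is a finite unordered list of elements of $G$ with repetition allowed; its length is the number of terms. For a sequence $S=g_1\cdot\ldots\cdot g_\ell$, $\pi(S)=\{g_{\tau(1)}\cdots g_{\tau(\ell)}:\tau \text{ a permutation of } [1,\ell]\}$. $S$ is product-one if $1\in\pi(S)$. The small Davenport constant $\mathsf d(G)$ is the maximal integer $\ell$ such that there is a sequence of length $\ell$ over $G$ having no nonempty product-one subsequence. *)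

theory Defs
  imports "HOL-Algebra.Generated_Groups" "HOL-Library.Multiset" "HOL-Number_Theory.Cong"
begin

text \<open>Sequences over G are finite multisets of elements of the carrier.\<close>

definition list_prod :: "('a, 'b) monoid_scheme \<Rightarrow> 'a list \<Rightarrow> 'a" where
  "list_prod G xs = foldr (\<lambda>a b. a \<otimes>\<^bsub>G\<^esub> b) xs \<one>\<^bsub>G\<^esub>"

definition product_one :: "('a, 'b) monoid_scheme \<Rightarrow> 'a multiset \<Rightarrow> bool" where
  "product_one G S \<longleftrightarrow> (\<exists>xs. mset xs = S \<and> list_prod G xs = \<one>\<^bsub>G\<^esub>)"

definition product_one_free :: "('a, 'b) monoid_scheme \<Rightarrow> 'a multiset \<Rightarrow> bool" where
  "product_one_free G S \<longleftrightarrow> (\<forall>T. T \<subseteq># S \<and> T \<noteq> {#} \<longrightarrow> \<not> product_one G T)"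

definition small_davenport :: "('a, 'b) monoid_scheme \<Rightarrow> nat" where
  "small_davenport G = (GREATEST l. \<exists>S. set_mset S \<subseteq> carrier G \<and> size S = l \<and> product_one_free G S)"

end

theory Submission
  imports Defs "HOL-Algebra.Multiplicative_Group"
begin

(* Let N = <y>, a normal subgroup of order m and index p; the gcd condition implies that no
   element outside N commutes with a nontrivial element of N. In a product-one free
   sequence S of length at least p, two of the first p + 1 prefix products lie in the
   same coset of N, which yields a block T of S whose product c lies in N while its
   proper prefixes lie in pairwise distinct cosets. The |T| rotations of T then have
   pairwise distinct products in N - {1}, namely the conjugates of c by these prefixes.
   Splitting off such blocks and applying Scherk's theorem in the abelian group N
   shows that the subsequence products of S lying in N number at least |S| - p + 1.
   They avoid 1, so |S| <= m + p - 2; the sequence y^(m-1) x^(p-1) attains this. *)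

lemma (in monoid) list_prod_Nil [simp]: "list_prod G [] = \<one>"
  by (simp add: list_prod_def)

lemma (in monoid) list_prod_Cons [simp]: "list_prod G (a # xs) = a \<otimes> list_prod G xs"
  by (simp add: list_prod_def)

lemma (in monoid) list_prod_closed: "set xs \<subseteq> carrier G \<Longrightarrow> list_prod G xs \<in> carrier G"
  by (induction xs) auto

lemma (in monoid) list_prod_append:
  "set xs \<subseteq> carrier G \<Longrightarrow> set ys \<subseteq> carrier G \<Longrightarrow> list_prod G (xs @ ys) = list_prod G xs \<otimes> list_prod G ys"
  by (induction xs) (auto simp: m_assoc list_prod_closed)

lemma (in monoid) list_prod_replicate: "a \<in> carrier G \<Longrightarrow> list_prod G (replicate n a) = a [^] n"
  by (induction n) (simp_all add: nat_pow_mult[of a 1, simplified, symmetric] pow_mult_distrib)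

lemma (in monoid) list_prod_take_closed:
  "set xs \<subseteq> carrier G \<Longrightarrow> list_prod G (take k xs) \<in> carrier G"
  by (meson list_prod_closed set_take_subset subset_trans)

lemma (in monoid) list_prod_take_add:
  assumes "set xs \<subseteq> carrier G"
  shows "list_prod G (take (i + k) xs) = list_prod G (take i xs) \<otimes> list_prod G (take k (drop i xs))"
proof -
  have "set (take i xs) \<subseteq> carrier G" "set (take k (drop i xs)) \<subseteq> carrier G"
    using assms by (meson set_drop_subset set_take_subset subset_trans)+
  then show ?thesis by (simp add: take_add list_prod_append)
qed

lemma (in group) list_prod_rotate:
  assumes "set xs \<subseteq> carrier G" "k < length xs"
  shows "list_prod G (rotate k xs) = inv (list_prod G (take k xs)) \<otimes> list_prod G xs \<otimes> list_prod G (take k xs)"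
proof -
  have closed: "list_prod G (take k xs) \<in> carrier G" "list_prod G (drop k xs) \<in> carrier G"
    using assms(1) by (meson list_prod_closed set_take_subset set_drop_subset subset_trans)+
  have "list_prod G xs = list_prod G (take k xs) \<otimes> list_prod G (drop k xs)"
    using assms(1) list_prod_append
    by (metis append_take_drop_id set_drop_subset set_take_subset subset_trans)
  moreover have "list_prod G (rotate k xs) = list_prod G (drop k xs) \<otimes> list_prod G (take k xs)"
    using assms by (metis list_prod_append mod_less rotate_drop_take set_drop_subset set_take_subset subset_trans)
  ultimately show ?thesis
    using closed by (simp add: m_assoc[symmetric])
qed

definition subsequence_products :: "('a, 'b) monoid_scheme \<Rightarrow> 'a multiset \<Rightarrow> 'a set" where
  "subsequence_products G S = {list_prod G xs | xs. xs \<noteq> [] \<and> mset xs \<subseteq># S}"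

lemma product_one_free_iff_one_notin_subsequence_products:
  "product_one_free G S \<longleftrightarrow> \<one>\<^bsub>G\<^esub> \<notin> subsequence_products G S"
proof -
  have "product_one G T \<longleftrightarrow> (\<exists>xs. mset xs = T \<and> list_prod G xs = \<one>\<^bsub>G\<^esub>)" for T
    by (simp add: product_one_def)
  then show ?thesis
    unfolding product_one_free_def subsequence_products_def
    by (smt (verit) mem_Collect_eq mset_zero_iff)
qed

lemma subsequence_products_mono:
  "S \<subseteq># T \<Longrightarrow> subsequence_products G S \<subseteq> subsequence_products G T"
  unfolding subsequence_products_def by (auto intro: subset_mset.order_trans)

lemma product_one_free_subset: "product_one_free G T \<Longrightarrow> S \<subseteq># T \<Longrightarrow> product_one_free G S"
  using subsequence_products_mono product_one_free_iff_one_notin_subsequence_products by blast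

lemma (in monoid) subsequence_products_closed:
  "set_mset S \<subseteq> carrier G \<Longrightarrow> subsequence_products G S \<subseteq> carrier G"
  unfolding subsequence_products_def
  by (auto intro!: list_prod_closed dest!: set_mset_mono)

lemma (in monoid) mult_in_subsequence_products:
  assumes "set_mset S \<subseteq> carrier G" "set_mset T \<subseteq> carrier G"
    and "a \<in> subsequence_products G S" "b \<in> subsequence_products G T"
  shows "a \<otimes> b \<in> subsequence_products G (S + T)"
proof -
  obtain xs ys where xs: "a = list_prod G xs" "xs \<noteq> []" "mset xs \<subseteq># S"
    and ys: "b = list_prod G ys" "ys \<noteq> []" "mset ys \<subseteq># T"
    using assms(3,4) unfolding subsequence_products_def by blast
  have "set xs \<subseteq> carrier G" "set ys \<subseteq> carrier G"
    using xs(3) ys(3) assms(1,2) by (metis set_mset_mset set_mset_mono subset_trans)+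
  then have "a \<otimes> b = list_prod G (xs @ ys)" using xs ys list_prod_append by simp
  moreover have "mset (xs @ ys) \<subseteq># S + T" using xs(3) ys(3) by (simp add: subset_mset.add_mono)
  ultimately show ?thesis using xs(2) unfolding subsequence_products_def by blast
qed

lemma (in monoid) set_mult_subsequence_products:
  assumes "set_mset S \<subseteq> carrier G" "set_mset T \<subseteq> carrier G"
  shows "insert \<one> (subsequence_products G S) <#> insert \<one> (subsequence_products G T)
    \<subseteq> insert \<one> (subsequence_products G (S + T))"
proof
  fix c assume "c \<in> insert \<one> (subsequence_products G S) <#> insert \<one> (subsequence_products G T)"
  then obtain a b where a: "a \<in> insert \<one> (subsequence_products G S)"
    and b: "b \<in> insert \<one> (subsequence_products G T)" and c: "c = a \<otimes> b"
    unfolding set_mult_def by blast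
  have "a \<in> carrier G" "b \<in> carrier G"
    using a b subsequence_products_closed assms by blast+
  moreover have "subsequence_products G S \<subseteq> subsequence_products G (S + T)"
    "subsequence_products G T \<subseteq> subsequence_products G (S + T)"
    by (simp_all add: subsequence_products_mono)
  ultimately show "c \<in> insert \<one> (subsequence_products G (S + T))"
    using a b c mult_in_subsequence_products[OF assms] by auto
qed

lemma (in monoid) subsequence_products_mult_eq_one:
  assumes "set_mset S \<subseteq> carrier G" "set_mset T \<subseteq> carrier G" "product_one_free G (S + T)"
    and a: "a \<in> insert \<one> (subsequence_products G S)"
    and b: "b \<in> insert \<one> (subsequence_products G T)" and ab: "a \<otimes> b = \<one>"
  shows "a = \<one> \<and> b = \<one>"
proof (cases "a = \<one> \<or> b = \<one>")
  case True
  moreover have "a \<in> carrier G" "b \<in> carrier G"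
    using a b subsequence_products_closed assms(1,2) by blast+
  ultimately show ?thesis using ab by auto
next
  case False
  then have "a \<otimes> b \<in> subsequence_products G (S + T)"
    using a b mult_in_subsequence_products[OF assms(1,2)] by blast
  then show ?thesis
    using ab assms(3) by (simp add: product_one_free_iff_one_notin_subsequence_products)
qed

lemma mset_rotate [simp]: "mset (rotate k xs) = mset xs"
  by (metis append_take_drop_id mset_append rotate_drop_take add.commute)

lemma list_prod_rotate_in_subsequence_products:
  "xs \<noteq> [] \<Longrightarrow> list_prod G (rotate k xs) \<in> subsequence_products G (mset xs)"
  unfolding subsequence_products_def by (intro CollectI exI[of _ "rotate k xs"]) simp

lemma obtain_first_repetition:
  fixes f :: "nat \<Rightarrow> 'b"
  assumes "f ` {..n} \<subseteq> C" "finite C" "card C \<le> n"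
  obtains i j where "i < j" "j \<le> n" "f i = f j" "inj_on f {..<j}"
proof -
  have "\<not> inj_on f {..n}"
    using assms card_inj_on_le[of f "{..n}" C] by auto
  define j where "j = (LEAST j. \<not> inj_on f {..j})"
  have not_inj: "\<not> inj_on f {..j}"
    using \<open>\<not> inj_on f {..n}\<close> unfolding j_def by (rule LeastI)
  have "j \<le> n"
    using \<open>\<not> inj_on f {..n}\<close> unfolding j_def by (rule Least_le)
  have inj: "inj_on f {..<j}"
  proof (cases j)
    case (Suc k)
    then have "inj_on f {..k}" unfolding j_def by (metis lessI not_less_Least)
    then show ?thesis using Suc lessThan_Suc_atMost by simp
  qed simp
  have "{..j} = insert j {..<j}" by auto
  then obtain i where "i < j" "f i = f j" using not_inj inj by auto
  then show ?thesis using that \<open>j \<le> n\<close> inj by blast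
qed

lemma coprime_power_minus_one:
  fixes r :: int
  assumes "prime p" "[r ^ p = 1] (mod m)" "coprime (r - 1) m" "0 < e" "e < p"
  shows "coprime (r ^ e - 1) m"
proof -
  define d where "d = gcd (r ^ e - 1) m"
  have "d dvd r ^ e - 1" "d dvd m" unfolding d_def by simp_all
  then have e_cong: "[r ^ e = 1] (mod d)" and p_cong: "[r ^ p = 1] (mod d)"
    using cong_dvd_modulus[OF assms(2)] by (simp_all add: cong_iff_dvd_diff)
  have "\<not> p dvd e" using assms(4,5) by (simp add: nat_dvd_not_less)
  then have "coprime e p" using prime_imp_coprime[OF assms(1)] coprime_commute by blast
  then obtain u v where uv: "e * u = p * v + 1"
    using bezout_nat[of e p] assms(4) by (auto simp: coprime_iff_gcd_eq_1)
  have "[r = r ^ (p * v) * r] (mod d)"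
    using cong_mult[OF cong_pow[OF p_cong, of v] cong_refl[of r]] by (simp add: power_mult cong_sym)
  also have "r ^ (p * v) * r = (r ^ e) ^ u" by (simp add: uv flip: power_mult)
  also have "[(r ^ e) ^ u = 1] (mod d)" using cong_pow[OF e_cong] by simp
  finally have "d dvd r - 1" by (simp add: cong_iff_dvd_diff)
  with \<open>d dvd m\<close> assms(3) have "is_unit d" by (metis coprime_common_divisor)
  then show ?thesis unfolding d_def by (simp add: coprime_iff_gcd_eq_1)
qed

lemma (in group) set_mult_subset_imp_trivial:
  assumes "finite A" "A \<subseteq> carrier G" "B \<subseteq> carrier G" "\<one> \<in> A" "\<one> \<in> B" "A <#> B \<subseteq> A"
    and unique: "\<And>a b. a \<in> A \<Longrightarrow> b \<in> B \<Longrightarrow> a \<otimes> b = \<one> \<Longrightarrow> a = \<one> \<and> b = \<one>"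
  shows "B = {\<one>}"
proof -
  have "b = \<one>" if b: "b \<in> B" for b
  proof -
    have "b \<in> carrier G" using b assms(3) by blast
    then have "inj_on (\<lambda>a. a \<otimes> b) A" using inj_on_multc assms(2) inj_on_subset by blast
    moreover have "(\<lambda>a. a \<otimes> b) ` A \<subseteq> A" using assms(6) b unfolding set_mult_def by blast
    ultimately have "(\<lambda>a. a \<otimes> b) ` A = A" using assms(1) by (simp add: endo_inj_surj)
    then obtain a where "a \<in> A" "a \<otimes> b = \<one>" using assms(4) by (metis imageE)
    then show ?thesis using unique b by blast
  qed
  then show ?thesis using assms(5) by blast
qed

lemma (in comm_group) dyson_transform:
  assumes A: "finite A" "A \<subseteq> carrier G" and B: "finite B" "B \<subseteq> carrier G" and a: "a \<in> carrier G"
  shows "card (A \<union> (\<lambda>b. a \<otimes> b) ` B) + card {b \<in> B. a \<otimes> b \<in> A} = card A + card B"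
    and "(A \<union> (\<lambda>b. a \<otimes> b) ` B) <#> {b \<in> B. a \<otimes> b \<in> A} \<subseteq> A <#> B"
proof -
  let ?B' = "{b \<in> B. a \<otimes> b \<in> A}"
  have "A \<union> (\<lambda>b. a \<otimes> b) ` B = A \<union> (\<lambda>b. a \<otimes> b) ` (B - ?B')"
    "A \<inter> (\<lambda>b. a \<otimes> b) ` (B - ?B') = {}"
    by auto
  moreover have "inj_on (\<lambda>b. a \<otimes> b) (B - ?B')"
    by (rule inj_on_subset[OF inj_on_cmult[OF a]]) (use B(2) in blast)
  ultimately have "card (A \<union> (\<lambda>b. a \<otimes> b) ` B) = card A + card (B - ?B')"
    using A(1) B(1) by (simp add: card_Un_disjoint card_image)
  moreover have "card (B - ?B') + card ?B' = card B"
    using B(1) by (simp add: card_Diff_subset card_mono)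
  ultimately show "card (A \<union> (\<lambda>b. a \<otimes> b) ` B) + card ?B' = card A + card B"
    by linarith
  show "(A \<union> (\<lambda>b. a \<otimes> b) ` B) <#> ?B' \<subseteq> A <#> B"
  proof
    fix c assume "c \<in> (A \<union> (\<lambda>b. a \<otimes> b) ` B) <#> ?B'"
    then obtain a' b' where "a' \<in> A \<union> (\<lambda>b. a \<otimes> b) ` B" "b' \<in> ?B'" "c = a' \<otimes> b'"
      unfolding set_mult_def by blast
    moreover have "(a \<otimes> b) \<otimes> b' = (a \<otimes> b') \<otimes> b" if "b \<in> B" "b' \<in> B" for b b'
      using that a B(2) by (metis m_assoc m_comm subsetD)
    ultimately show "c \<in> A <#> B" unfolding set_mult_def by auto
  qed
qed

theorem (in comm_group) scherk:
  assumes "finite A" "finite B" "A \<subseteq> carrier G" "B \<subseteq> carrier G" "\<one> \<in> A" "\<one> \<in> B"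
    and "\<And>a b. a \<in> A \<Longrightarrow> b \<in> B \<Longrightarrow> a \<otimes> b = \<one> \<Longrightarrow> a = \<one> \<and> b = \<one>"
  shows "card A + card B \<le> card (A <#> B) + 1"
  using assms
proof (induction "card B" arbitrary: A B rule: less_induct)
  case less
  show ?case
  proof (cases "A <#> B \<subseteq> A")
    case True
    then have "B = {\<one>}" using set_mult_subset_imp_trivial less.prems by blast
    moreover have "A <#> {\<one>} = A"
      using less.prems(3) by (simp flip: r_coset_eq_set_mult)
    ultimately show ?thesis by simp
  next
    case False
    then obtain a b where ab: "a \<in> A" "b \<in> B" "a \<otimes> b \<notin> A" unfolding set_mult_def by blast
    have a: "a \<in> carrier G" using ab(1) less.prems(3) by blast
    define A' where "A' = A \<union> (\<lambda>b. a \<otimes> b) ` B"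
    define B' where "B' = {b \<in> B. a \<otimes> b \<in> A}"
    have "B' \<subset> B" using ab unfolding B'_def by blast
    with less.prems(2) have smaller: "card B' < card B" by (rule psubset_card_mono)
    have unique': "a' = \<one> \<and> b' = \<one>"
      if a': "a' \<in> A'" and b': "b' \<in> B'" and one: "a' \<otimes> b' = \<one>" for a' b'
    proof (cases "a' \<in> A")
      case True then show ?thesis using b' one less.prems(7) unfolding B'_def by blast
    next
      case False
      then obtain b where b: "b \<in> B" "a' = a \<otimes> b" using a' unfolding A'_def by blast
      have "b \<in> carrier G" "b' \<in> carrier G" using b(1) b' less.prems(4) unfolding B'_def by auto
      then have "(a \<otimes> b') \<otimes> b = \<one>" using a b(2) one by (simp add: m_ac)
      then have "a \<otimes> b' = \<one>" "b = \<one>" using less.prems(7) b b' unfolding B'_def by auto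
      then show ?thesis using less.prems(7)[OF ab(1)] b' b a unfolding B'_def by auto
    qed
    have "finite A'" "finite B'" "\<one> \<in> A'" "\<one> \<in> B'" "A' \<subseteq> carrier G" "B' \<subseteq> carrier G"
      using less.prems(1-6) ab(1) a unfolding A'_def B'_def by auto
    with unique' have "card A' + card B' \<le> card (A' <#> B') + 1"
      using less.hyps[OF smaller] by blast
    moreover have "card (A' <#> B') \<le> card (A <#> B)"
      using dyson_transform(2)[OF less.prems(1,3,2,4) a] less.prems(1,2)
      unfolding A'_def B'_def by (intro card_mono) (auto simp: set_mult_def)
    moreover have "card A' + card B' = card A + card B"
      using dyson_transform(1)[OF less.prems(1,3,2,4) a] unfolding A'_def B'_def .
    ultimately show ?thesis by linarith
  qed
qed

lemma (in group) inv_mult_cancel_left [simp]: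
  "a \<in> carrier G \<Longrightarrow> b \<in> carrier G \<Longrightarrow> inv a \<otimes> (a \<otimes> b) = b"
  by (simp add: m_assoc[symmetric])

lemma (in group) mult_inv_cancel_left [simp]:
  "a \<in> carrier G \<Longrightarrow> b \<in> carrier G \<Longrightarrow> a \<otimes> (inv a \<otimes> b) = b"
  by (simp add: m_assoc[symmetric])

lemma (in normal) rcos_eq_iff:
  assumes "a \<in> carrier G" "b \<in> carrier G"
  shows "H #> a = H #> b \<longleftrightarrow> inv a \<otimes> b \<in> H"
proof -
  have "H #> a = H #> b \<longleftrightarrow> a \<otimes> inv b \<in> H"
  proof
    assume "H #> a = H #> b"
    then have "a \<in> H #> b" using rcos_self[OF assms(1) subgroup_axioms] by simp
    then show "a \<otimes> inv b \<in> H" using rcos_module_imp[OF is_group assms(2)] by blast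
  next
    assume "a \<otimes> inv b \<in> H"
    then have "a \<in> H #> b" using rcos_module_rev[OF is_group assms(2,1)] by blast
    then show "H #> a = H #> b" using repr_independence[OF _ assms(2) subgroup_axioms] by simp
  qed
  also have "\<dots> \<longleftrightarrow> inv a \<otimes> b \<in> H"
  proof
    assume "a \<otimes> inv b \<in> H"
    then have "inv (inv a \<otimes> (a \<otimes> inv b) \<otimes> a) \<in> H"
      using assms inv_op_closed1 by blast
    then show "inv a \<otimes> b \<in> H" using assms by (simp add: inv_mult_group)
  next
    assume "inv a \<otimes> b \<in> H"
    then have "inv (a \<otimes> (inv a \<otimes> b) \<otimes> inv a) \<in> H"
      using assms inv_op_closed2 by blast
    then show "a \<otimes> inv b \<in> H" using assms by (simp add: inv_mult_group)
  qed
  finally show ?thesis .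
qed

lemma (in group) conj_hom: "g \<in> carrier G \<Longrightarrow> (\<lambda>a. inv g \<otimes> a \<otimes> g) \<in> hom G G"
  by (rule homI) (simp_all add: m_assoc)

lemma (in group) conj_int_pow:
  assumes "g \<in> carrier G" "a \<in> carrier G"
  shows "inv g \<otimes> a [^] (k::int) \<otimes> g = (inv g \<otimes> a \<otimes> g) [^] k"
  using hom_int_pow[OF conj_hom[OF assms(1)] assms(2) is_group is_group] by simp

lemma (in normal) list_prod_mem_rcos_count:
  assumes "g \<in> carrier G" "set xs \<subseteq> insert g H"
  shows "list_prod G xs \<in> H #> g [^] count (mset xs) g"
  using assms(2)
proof (induction xs)
  case Nil
  then show ?case using rcos_self[OF one_closed subgroup_axioms] by simp
next
  case (Cons a xs)
  then obtain h where h: "h \<in> H" "list_prod G xs = h \<otimes> g [^] count (mset xs) g"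
    unfolding r_coset_def by auto
  have h_closed: "h \<in> carrier G" using h(1) by (rule mem_carrier)
  show ?case
  proof (cases "a = g")
    case True
    have "list_prod G (a # xs) = (g \<otimes> h \<otimes> inv g) \<otimes> (g \<otimes> g [^] count (mset xs) g)"
      using True h(2) assms(1) h_closed by (simp add: m_assoc)
    also have "g \<otimes> g [^] count (mset xs) g = g [^] count (mset (a # xs)) g"
      using True nat_pow_Suc2[OF assms(1)] by simp
    finally have "list_prod G (a # xs) = (g \<otimes> h \<otimes> inv g) \<otimes> g [^] count (mset (a # xs)) g" .
    moreover have "g \<otimes> h \<otimes> inv g \<in> H" using inv_op_closed2 assms(1) h(1) by blast
    ultimately show ?thesis unfolding r_coset_def by blast
  next
    case False
    then have "a \<in> H" using Cons.prems by simp
    then have "list_prod G (a # xs) = (a \<otimes> h) \<otimes> g [^] count (mset xs) g"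
      using h(2) h_closed assms(1) by (simp add: m_assoc mem_carrier)
    moreover have "a \<otimes> h \<in> H" using subgroup.m_closed[OF subgroup_axioms \<open>a \<in> H\<close> h(1)] .
    ultimately show ?thesis using False unfolding r_coset_def by auto
  qed
qed

locale abelian_frobenius_kernel = group G for G :: "('a, 'b) monoid_scheme" (structure) +
  fixes N :: "'a set"
  assumes finite_carrier: "finite (carrier G)"
    and normal: "N \<lhd> G"
    and kernel_comm: "\<And>a b. a \<in> N \<Longrightarrow> b \<in> N \<Longrightarrow> a \<otimes> b = b \<otimes> a"
    and centralizer_subset: "\<And>g n. g \<in> carrier G \<Longrightarrow> n \<in> N \<Longrightarrow> n \<noteq> \<one> \<Longrightarrow> g \<otimes> n = n \<otimes> g \<Longrightarrow> g \<in> N"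
begin

lemma subgroup_kernel: "subgroup N G"
  using normal normal_imp_subgroup by blast

lemma kernel_subset_carrier: "N \<subseteq> carrier G"
  using subgroup_kernel subgroup.subset by blast

lemma finite_kernel: "finite N"
  using kernel_subset_carrier finite_carrier by (rule finite_subset)

lemma comm_group_kernel: "comm_group (G\<lparr>carrier := N\<rparr>)"
  using group.group_comm_groupI[OF subgroup.subgroup_is_group[OF subgroup_kernel is_group]] kernel_comm
  by simp

lemma rcos_kernel_eq_iff: "a \<in> carrier G \<Longrightarrow> b \<in> carrier G \<Longrightarrow> N #> a = N #> b \<longleftrightarrow> inv a \<otimes> b \<in> N"
  using normal.rcos_eq_iff[OF normal] .

lemma conj_kernel_nontrivial:
  assumes "c \<in> N" "c \<noteq> \<one>" "q \<in> carrier G"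
  shows "inv q \<otimes> c \<otimes> q \<in> N" "inv q \<otimes> c \<otimes> q \<noteq> \<one>"
proof -
  show "inv q \<otimes> c \<otimes> q \<in> N" using normal.inv_op_closed1[OF normal assms(3,1)] .
  have "q \<otimes> (inv q \<otimes> c \<otimes> q) \<otimes> inv q = c"
    using assms kernel_subset_carrier by (simp add: m_assoc subsetD)
  then show "inv q \<otimes> c \<otimes> q \<noteq> \<one>" using assms(2,3) by auto
qed

lemma rcos_eq_if_conj_eq:
  assumes c: "c \<in> N" "c \<noteq> \<one>" and q: "q \<in> carrier G" "q' \<in> carrier G"
    and eq: "inv q \<otimes> c \<otimes> q = inv q' \<otimes> c \<otimes> q'"
  shows "N #> q = N #> q'"
proof -
  define d where "d = inv q \<otimes> c \<otimes> q"
  have d: "d \<in> N" "d \<noteq> \<one>" unfolding d_def using conj_kernel_nontrivial[OF c q(1)] by auto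
  have c_closed: "c \<in> carrier G" using c(1) kernel_subset_carrier by blast
  have "(inv q \<otimes> q') \<otimes> d = inv q \<otimes> c \<otimes> q'"
    unfolding d_def eq using c_closed q by (simp add: m_assoc)
  also have "\<dots> = d \<otimes> (inv q \<otimes> q')"
    unfolding d_def using c_closed q by (simp add: m_assoc)
  finally have "inv q \<otimes> q' \<in> N" using centralizer_subset[OF _ d] q by simp
  then show ?thesis using rcos_kernel_eq_iff q by simp
qed

lemma obtain_kernel_block:
  assumes ls: "set ls \<subseteq> carrier G" and long: "card (rcosets N) \<le> length ls"
  obtains zs where "zs \<noteq> []" "mset zs \<subseteq># mset ls" "list_prod G zs \<in> N"
    "inj_on (\<lambda>k. N #> list_prod G (take k zs)) {..<length zs}"
proof -
  define P where "P k = list_prod G (take k ls)" for k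
  have P_closed: "P k \<in> carrier G" for k
    unfolding P_def using ls by (rule list_prod_take_closed)
  have "(\<lambda>k. N #> P k) ` {..card (rcosets N)} \<subseteq> rcosets N"
    using P_closed kernel_subset_carrier by (auto intro!: rcosetsI)
  moreover have "finite (rcosets N)"
    using finite_carrier rcosets_subset_PowG[OF subgroup_kernel] finite_subset by blast
  ultimately obtain i j where ij: "i < j" "j \<le> card (rcosets N)" "N #> P i = N #> P j"
    and inj: "inj_on (\<lambda>k. N #> P k) {..<j}"
    by (rule obtain_first_repetition) simp
  define zs where "zs = take (j - i) (drop i ls)"
  define Q where "Q k = list_prod G (take k zs)" for k
  have zs: "set zs \<subseteq> carrier G"
    unfolding zs_def using ls by (meson set_drop_subset set_take_subset subset_trans)
  have Q_closed: "Q k \<in> carrier G" for k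
    unfolding Q_def using zs by (rule list_prod_take_closed)
  have length_zs: "length zs = j - i"
    unfolding zs_def using ij long by simp
  have P_split: "P (i + k) = P i \<otimes> Q k" if "k \<le> j - i" for k
    unfolding P_def Q_def zs_def using list_prod_take_add[OF ls] that by (simp add: min_def)
  show thesis
  proof
    show "zs \<noteq> []" using length_zs ij(1) by auto
    show "mset zs \<subseteq># mset ls"
      unfolding zs_def
      by (metis append_take_drop_id mset_append mset_subset_eq_add_left mset_subset_eq_add_right subset_mset.order_trans)
    have "P j = P i \<otimes> list_prod G zs"
      using P_split[of "j - i"] ij(1) length_zs unfolding Q_def by simp
    then show "list_prod G zs \<in> N"
      using ij(3) rcos_kernel_eq_iff P_closed zs list_prod_closed by simp
    show "inj_on (\<lambda>k. N #> list_prod G (take k zs)) {..<length zs}"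
    proof (rule inj_onI)
      fix k l assume k: "k \<in> {..<length zs}" and l: "l \<in> {..<length zs}"
        and "N #> list_prod G (take k zs) = N #> list_prod G (take l zs)"
      then have "N #> P (i + k) = N #> P (i + l)"
        using P_split length_zs rcos_kernel_eq_iff P_closed Q_closed unfolding Q_def
        by (simp add: inv_mult_group m_assoc)
      moreover have "i + k \<in> {..<j}" "i + l \<in> {..<j}" using k l length_zs by auto
      ultimately show "k = l" using inj by (auto dest: inj_onD)
    qed
  qed
qed

lemma rotation_products:
  assumes zs: "set zs \<subseteq> carrier G" and c: "list_prod G zs \<in> N" "list_prod G zs \<noteq> \<one>"
    and inj: "inj_on (\<lambda>k. N #> list_prod G (take k zs)) {..<length zs}"
  shows "card ((\<lambda>k. list_prod G (rotate k zs)) ` {..<length zs}) = length zs"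
    and "(\<lambda>k. list_prod G (rotate k zs)) ` {..<length zs} \<subseteq> N - {\<one>}"
proof -
  define Q where "Q k = list_prod G (take k zs)" for k
  have Q_closed: "Q k \<in> carrier G" for k
    unfolding Q_def using zs by (rule list_prod_take_closed)
  have rotate: "list_prod G (rotate k zs) = inv (Q k) \<otimes> list_prod G zs \<otimes> Q k"
    if "k < length zs" for k
    unfolding Q_def using list_prod_rotate[OF zs that] .
  show "(\<lambda>k. list_prod G (rotate k zs)) ` {..<length zs} \<subseteq> N - {\<one>}"
  proof
    fix d assume "d \<in> (\<lambda>k. list_prod G (rotate k zs)) ` {..<length zs}"
    then obtain k where k: "k < length zs" and d: "d = list_prod G (rotate k zs)" by blast
    have "d = inv (Q k) \<otimes> list_prod G zs \<otimes> Q k" unfolding d by (rule rotate[OF k])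
    then show "d \<in> N - {\<one>}" using conj_kernel_nontrivial[OF c Q_closed[of k]] by (metis DiffI singletonD)
  qed
  have "inj_on (\<lambda>k. list_prod G (rotate k zs)) {..<length zs}"
  proof (rule inj_onI)
    fix k l assume k: "k \<in> {..<length zs}" and l: "l \<in> {..<length zs}"
      and "list_prod G (rotate k zs) = list_prod G (rotate l zs)"
    then have "inv (Q k) \<otimes> list_prod G zs \<otimes> Q k = inv (Q l) \<otimes> list_prod G zs \<otimes> Q l"
      using rotate k l by simp
    then have "N #> Q k = N #> Q l" by (rule rcos_eq_if_conj_eq[OF c Q_closed Q_closed])
    then show "k = l" using inj k l unfolding Q_def by (auto dest: inj_onD)
  qed
  then show "card ((\<lambda>k. list_prod G (rotate k zs)) ` {..<length zs}) = length zs"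
    by (simp add: card_image)
qed

definition kernel_products :: "'a multiset \<Rightarrow> 'a set" where
  "kernel_products S = insert \<one> (subsequence_products G S \<inter> N)"

lemma kernel_products_subset: "kernel_products S \<subseteq> N"
  unfolding kernel_products_def using subgroup.one_closed[OF subgroup_kernel] by blast

lemma finite_kernel_products: "finite (kernel_products S)"
  using kernel_products_subset finite_kernel by (rule finite_subset)

lemma one_in_kernel_products: "\<one> \<in> kernel_products S"
  unfolding kernel_products_def by simp

lemma card_kernel_products_add:
  assumes S: "set_mset S \<subseteq> carrier G" and T: "set_mset T \<subseteq> carrier G"
    and free: "product_one_free G (S + T)"
    and X: "X \<subseteq> subsequence_products G T \<inter> N"
  shows "card (kernel_products S) + card X \<le> card (kernel_products (S + T))"
proof -
  have S_sub: "kernel_products S \<subseteq> insert \<one> (subsequence_products G S)"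
    unfolding kernel_products_def by blast
  have X_sub: "insert \<one> X \<subseteq> insert \<one> (subsequence_products G T)" and X_N: "insert \<one> X \<subseteq> N"
    using X subgroup.one_closed[OF subgroup_kernel] by blast+
  have "\<one> \<notin> X"
    using X free subsequence_products_mono[of T "S + T" G]
    by (auto simp: product_one_free_iff_one_notin_subsequence_products)
  have X_finite: "finite X" using X finite_kernel finite_subset by blast
  have "kernel_products S <#> insert \<one> X \<subseteq> insert \<one> (subsequence_products G S) <#> insert \<one> (subsequence_products G T)"
    using S_sub X_sub by (rule mono_set_mult)
  also have "\<dots> \<subseteq> insert \<one> (subsequence_products G (S + T))"
    using S T by (rule set_mult_subsequence_products)
  finally have "kernel_products S <#> insert \<one> X \<subseteq> kernel_products (S + T)"
    using mono_set_mult[OF kernel_products_subset X_N] subgroup_mult_id[OF subgroup_kernel]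
    unfolding kernel_products_def by blast
  then have "card (kernel_products S <#> insert \<one> X) \<le> card (kernel_products (S + T))"
    using finite_kernel_products by (rule card_mono[rotated])
  moreover interpret kernel: comm_group "G\<lparr>carrier := N\<rparr>"
    by (rule comm_group_kernel)
  have unique: "a = \<one> \<and> b = \<one>"
    if "a \<in> kernel_products S" "b \<in> insert \<one> X" "a \<otimes> b = \<one>" for a b
    using subsequence_products_mult_eq_one[OF S T free] S_sub X_sub that by blast
  have "card (kernel_products S) + card (insert \<one> X) \<le> card (kernel_products S <#> insert \<one> X) + 1"
    using kernel.scherk[simplified, OF finite_kernel_products finite.insertI[OF X_finite]
        kernel_products_subset X_N one_in_kernel_products insertI1 unique]
    by simp
  ultimately show ?thesis using \<open>\<one> \<notin> X\<close> X_finite by simp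
qed

lemma obtain_block_growing_kernel_products:
  assumes S: "set_mset S \<subseteq> carrier G" and free: "product_one_free G S"
    and long: "card (rcosets N) \<le> size S"
  obtains T where "T \<noteq> {#}" "T \<subseteq># S"
    "card (kernel_products (S - T)) + size T \<le> card (kernel_products S)"
proof -
  obtain ls where ls: "mset ls = S" using ex_mset by blast
  have ls_carrier: "set ls \<subseteq> carrier G" and ls_long: "card (rcosets N) \<le> length ls"
    using S long ls by auto
  obtain zs where zs: "zs \<noteq> []" "mset zs \<subseteq># S" "list_prod G zs \<in> N"
    and cosets: "inj_on (\<lambda>k. N #> list_prod G (take k zs)) {..<length zs}"
    by (rule obtain_kernel_block[OF ls_carrier ls_long, unfolded ls])
  have split: "S = (S - mset zs) + mset zs" using zs(2) by simp
  have zs_carrier: "set_mset (mset zs) \<subseteq> carrier G"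
    using S set_mset_mono[OF zs(2)] by blast
  have rest_carrier: "set_mset (S - mset zs) \<subseteq> carrier G"
    using S by (auto dest: in_diffD)
  have "list_prod G zs \<in> subsequence_products G S"
    using zs(1,2) unfolding subsequence_products_def by blast
  then have "list_prod G zs \<noteq> \<one>"
    using free by (auto simp: product_one_free_iff_one_notin_subsequence_products)
  define X where "X = (\<lambda>k. list_prod G (rotate k zs)) ` {..<length zs}"
  have "card X = length zs" and "X \<subseteq> N"
    using rotation_products[OF _ zs(3) \<open>list_prod G zs \<noteq> \<one>\<close> cosets] zs_carrier
    unfolding X_def by auto
  moreover have "X \<subseteq> subsequence_products G (mset zs)"
    unfolding X_def using list_prod_rotate_in_subsequence_products[OF zs(1)] by blast
  ultimately have "card (kernel_products (S - mset zs)) + size (mset zs) \<le> card (kernel_products S)"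
    using card_kernel_products_add[OF rest_carrier zs_carrier, of X] free split by auto
  then show thesis using that[of "mset zs"] zs(1,2) by simp
qed

lemma card_kernel_products_lower_bound:
  assumes "set_mset S \<subseteq> carrier G" "product_one_free G S"
  shows "size S + 2 \<le> card (kernel_products S) + card (rcosets N)"
  using assms
proof (induction "size S" arbitrary: S rule: less_induct)
  case less
  show ?case
  proof (cases "size S < card (rcosets N)")
    case True
    have "0 < card (kernel_products S)"
      using finite_kernel_products one_in_kernel_products by (auto simp: card_gt_0_iff)
    with True show ?thesis by linarith
  next
    case False
    then obtain T where T: "T \<noteq> {#}" "T \<subseteq># S"
      and grow: "card (kernel_products (S - T)) + size T \<le> card (kernel_products S)"
      using obtain_block_growing_kernel_products less.prems by (metis not_less)
    have "size (S - T) + 2 \<le> card (kernel_products (S - T)) + card (rcosets N)"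
    proof (rule less.hyps)
      show "size (S - T) < size S"
        using T size_Diff_submset[OF T(2)] size_mset_mono[OF T(2)] by (simp add: nonempty_has_size)
      show "set_mset (S - T) \<subseteq> carrier G" using less.prems(1) by (auto dest: in_diffD)
      show "product_one_free G (S - T)"
        using less.prems(2) by (rule product_one_free_subset) simp
    qed
    moreover have "size S = size (S - T) + size T"
      using T(2) by (simp add: size_Diff_submset size_mset_mono)
    ultimately show ?thesis using grow by linarith
  qed
qed

theorem product_one_free_size_bound:
  assumes "set_mset S \<subseteq> carrier G" "product_one_free G S"
  shows "size S + 2 \<le> card N + card (rcosets N)"
proof -
  have "card (kernel_products S) \<le> card N"
    using kernel_products_subset finite_kernel by (rule card_mono[rotated])
  then show ?thesis using card_kernel_products_lower_bound[OF assms] by linarith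
qed

end

locale metacyclic = group G for G :: "('a, 'b) monoid_scheme" (structure) +
  fixes p m :: nat and r :: int and x y :: 'a
  assumes prime_p: "prime p" and m_pos: "m \<ge> 1"
    and r_pow: "[r ^ p = 1] (mod int m)" and r_coprime: "coprime (r - 1) (int m)"
    and x_closed: "x \<in> carrier G" and y_closed: "y \<in> carrier G"
    and generated: "generate G {x, y} = carrier G"
    and x_pow: "x [^] p = \<one>" and y_pow: "y [^] m = \<one>"
    and conj_y: "inv x \<otimes> y \<otimes> x = y [^] r"
    and finite_G: "finite (carrier G)" and card_G: "card (carrier G) = p * m"
begin

abbreviation N :: "'a set" where "N \<equiv> generate G {y}"

lemma p_gt_1: "p > 1"
  using prime_p prime_gt_1_nat by blast

lemma y_pow_mult_x: "y [^] (k::int) \<otimes> x = x \<otimes> y [^] (r * k)"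
proof -
  have "inv x \<otimes> y [^] k \<otimes> x = y [^] (r * k)"
    using conj_int_pow[OF x_closed y_closed] conj_y int_pow_pow[OF y_closed] by simp
  then have "x \<otimes> (inv x \<otimes> y [^] k \<otimes> x) = x \<otimes> y [^] (r * k)" by simp
  then show ?thesis using x_closed y_closed by (simp add: m_assoc)
qed

lemma y_pow_mult_x_pow: "y [^] (k::int) \<otimes> x [^] (d::nat) = x [^] d \<otimes> y [^] (r ^ d * k)"
proof (induction d arbitrary: k)
  case 0
  then show ?case using y_closed by simp
next
  case (Suc d)
  have "y [^] k \<otimes> x [^] Suc d = (y [^] k \<otimes> x [^] d) \<otimes> x"
    using x_closed y_closed by (simp add: m_assoc nat_pow_Suc2)
  also have "\<dots> = x [^] d \<otimes> (y [^] (r ^ d * k) \<otimes> x)"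
    using Suc x_closed y_closed by (simp add: m_assoc)
  also have "\<dots> = x [^] Suc d \<otimes> y [^] (r ^ Suc d * k)"
    using x_closed y_closed by (simp add: y_pow_mult_x m_assoc nat_pow_Suc2 mult.assoc)
  finally show ?case .
qed

lemma mult_normal_form:
  "(x [^] (b::nat) \<otimes> y [^] (k::int)) \<otimes> (x [^] (d::nat) \<otimes> y [^] (j::int))
    = x [^] (b + d) \<otimes> y [^] (r ^ d * k + j)"
proof -
  have "(x [^] b \<otimes> y [^] k) \<otimes> (x [^] d \<otimes> y [^] j) = x [^] b \<otimes> (y [^] k \<otimes> x [^] d) \<otimes> y [^] j"
    using x_closed y_closed by (simp add: m_assoc)
  also have "\<dots> = (x [^] b \<otimes> x [^] d) \<otimes> (y [^] (r ^ d * k) \<otimes> y [^] j)"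
    using x_closed y_closed by (simp add: y_pow_mult_x_pow m_assoc)
  also have "\<dots> = x [^] (b + d) \<otimes> y [^] (r ^ d * k + j)"
    using x_closed y_closed by (simp add: nat_pow_mult int_pow_mult)
  finally show ?thesis .
qed

lemma y_pow_mult_normal_form:
  "y [^] (k::int) \<otimes> (x [^] (b::nat) \<otimes> y [^] (j::int)) = (x [^] b \<otimes> y [^] j) \<otimes> y [^] (r ^ b * k)"
  using mult_normal_form[of 0 k b j] mult_normal_form[of b j 0 "r ^ b * k"] y_closed
  by (simp add: add.commute)

lemma x_pow_mod: "x [^] (b::nat) = x [^] (b mod p)"
proof -
  have "x [^] b = (x [^] p) [^] (b div p) \<otimes> x [^] (b mod p)"
    using x_closed by (simp add: nat_pow_pow nat_pow_mult)
  then show ?thesis using x_pow x_closed by simp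
qed

lemma inv_x: "inv x = x [^] (p - 1)"
proof (rule inv_equality)
  have "Suc (p - 1) = p" using p_gt_1 by simp
  then show "x [^] (p - 1) \<otimes> x = \<one>"
    using x_pow nat_pow_Suc[of x "p - 1"] by simp
qed (use x_closed in simp_all)

lemma normal_form: "g \<in> carrier G \<Longrightarrow> \<exists>b<p. \<exists>k::int. g = x [^] b \<otimes> y [^] k"
proof -
  have "\<exists>b::nat. \<exists>k::int. g = x [^] b \<otimes> y [^] k" if "g \<in> generate G {x, y}" for g
    using that
  proof (induction g rule: generate.induct)
    case one
    show ?case by (intro exI[of _ 0]) simp
  next
    case (incl h)
    then have "h = x [^] (1::nat) \<otimes> y [^] (0::int) \<or> h = x [^] (0::nat) \<otimes> y [^] (1::int)"
      using x_closed y_closed by auto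
    then show ?case by blast
  next
    case (inv h)
    from inv_x have "inv h = x [^] (p - 1) \<otimes> y [^] (0::int) \<or> inv h = x [^] (0::nat) \<otimes> y [^] (- 1::int)"
      using inv x_closed y_closed by (auto simp: int_pow_neg)
    then show ?case by blast
  next
    case (eng h1 h2)
    then show ?case using mult_normal_form by blast
  qed
  moreover assume "g \<in> carrier G"
  ultimately obtain b :: nat and k :: int where "g = x [^] b \<otimes> y [^] k" using generated by blast
  then have "g = x [^] (b mod p) \<otimes> y [^] k" by (simp only: x_pow_mod[of b])
  moreover have "b mod p < p" using p_gt_1 by simp
  ultimately show ?thesis by blast
qed

lemma ord_y_dvd: "ord y dvd m"
  using pow_eq_id[OF y_closed] y_pow by blast

lemma card_N: "card N = m"
proof (rule antisym)
  show "card N \<le> m"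
    using ord_y_dvd m_pos generate_pow_card[OF y_closed] by (simp add: dvd_imp_le)
  have "carrier G \<subseteq> (\<lambda>(b, n). x [^] b \<otimes> n) ` ({..<p} \<times> N)"
  proof
    fix g assume "g \<in> carrier G"
    then obtain b k where "b < p" "g = x [^] b \<otimes> y [^] (k::int)" using normal_form by blast
    moreover have "y [^] k \<in> N" using generate_pow[OF y_closed] by blast
    ultimately show "g \<in> (\<lambda>(b, n). x [^] b \<otimes> n) ` ({..<p} \<times> N)" by force
  qed
  moreover have "finite ({..<p} \<times> N)"
    using finite_subset[OF generate_incl finite_G] y_closed by simp
  ultimately have "card (carrier G) \<le> card ((\<lambda>(b, n). x [^] b \<otimes> n) ` ({..<p} \<times> N))"
    by (intro card_mono finite_imageI)
  also have "\<dots> \<le> card ({..<p} \<times> N)"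
    using \<open>finite ({..<p} \<times> N)\<close> by (rule card_image_le)
  finally have "card (carrier G) \<le> card ({..<p} \<times> N)" .
  then have "p * m \<le> p * card N" using card_G by (simp add: card_cartesian_product)
  then show "m \<le> card N" using p_gt_1 by simp
qed

lemma ord_y: "ord y = m"
  using card_N generate_pow_card[OF y_closed] by simp

lemma N_powers: "N = range (\<lambda>k::int. y [^] k)"
  using generate_pow[OF y_closed] by auto

lemma subgroup_N: "subgroup N G"
  using generate_is_subgroup y_closed by simp

lemma obtain_y_pow_twist:
  assumes "g \<in> carrier G"
  obtains b where "b < p" "\<And>k::int. y [^] k \<otimes> g = g \<otimes> y [^] (r ^ b * k)" "b = 0 \<Longrightarrow> g \<in> N"
proof -
  obtain b j where b: "b < p" and g: "g = x [^] b \<otimes> y [^] (j::int)"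
    using normal_form assms by blast
  show thesis
  proof (rule that[OF b])
    show "y [^] k \<otimes> g = g \<otimes> y [^] (r ^ b * k)" for k :: int
      unfolding g by (rule y_pow_mult_normal_form)
    show "g \<in> N" if "b = 0"
      using g that y_closed N_powers by simp
  qed
qed

lemma normal_N: "N \<lhd> G"
proof (rule normal_invI[OF subgroup_N])
  fix g h assume g: "g \<in> carrier G" and "h \<in> N"
  then obtain k where h: "h = y [^] (k::int)" using N_powers by blast
  obtain b where commute: "\<And>k::int. y [^] k \<otimes> inv g = inv g \<otimes> y [^] (r ^ b * k)"
    using obtain_y_pow_twist[OF inv_closed[OF g]] by blast
  have "g \<otimes> h \<otimes> inv g = g \<otimes> (y [^] k \<otimes> inv g)"
    unfolding h using g y_closed by (simp add: m_assoc)
  also have "\<dots> = y [^] (r ^ b * k)"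
    unfolding commute using g y_closed by simp
  finally show "g \<otimes> h \<otimes> inv g \<in> N" using N_powers by simp
qed

lemma index_N: "card (rcosets N) = p"
  using lagrange[OF subgroup_N] card_N card_G m_pos by (simp add: order_def)

lemma centralizer_N:
  assumes g: "g \<in> carrier G" and n: "n \<in> N" "n \<noteq> \<one>" and comm: "g \<otimes> n = n \<otimes> g"
  shows "g \<in> N"
proof -
  obtain k where k: "n = y [^] (k::int)" using n(1) N_powers by blast
  obtain b where b: "b < p" "y [^] k \<otimes> g = g \<otimes> y [^] (r ^ b * k)" and b0: "b = 0 \<Longrightarrow> g \<in> N"
    using obtain_y_pow_twist[OF g] by metis
  have "g \<otimes> y [^] k = g \<otimes> y [^] (r ^ b * k)" using comm b(2) k by simp
  then have "y [^] k = y [^] (r ^ b * k)" using g y_closed by simp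
  then have "int m dvd (r ^ b - 1) * k"
    using int_pow_eq[OF y_closed] ord_y by (simp add: algebra_simps)
  moreover have "\<not> int m dvd k" using n(2) k int_pow_eq_id[OF y_closed] ord_y by simp
  ultimately have "\<not> coprime (int m) (r ^ b - 1)"
    using coprime_dvd_mult_right_iff by blast
  then have "b = 0"
    using coprime_power_minus_one[OF prime_p r_pow r_coprime, of b] b(1) coprime_commute by auto
  then show ?thesis by (rule b0)
qed

lemma N_comm: "a \<in> N \<Longrightarrow> b \<in> N \<Longrightarrow> a \<otimes> b = b \<otimes> a"
  using N_powers y_closed by (auto simp flip: int_pow_mult simp: add.commute)

sublocale abelian_frobenius_kernel G N
  by (rule abelian_frobenius_kernel.intro[OF is_group
        abelian_frobenius_kernel_axioms.intro[OF finite_G normal_N N_comm centralizer_N]])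

lemma product_one_free_size_le:
  assumes "set_mset S \<subseteq> carrier G" "product_one_free G S"
  shows "size S \<le> m + p - 2"
  using product_one_free_size_bound[OF assms] card_N index_N by linarith

lemma x_pow_notin_N:
  assumes "0 < c" "c < p"
  shows "x [^] c \<notin> N"
proof
  assume xc: "x [^] c \<in> N"
  have "\<not> p dvd c" using assms by (simp add: nat_dvd_not_less)
  then have "coprime c p" using prime_imp_coprime[OF prime_p] coprime_commute by blast
  then obtain u v where uv: "c * u = p * v + 1"
    using bezout_nat[of c p] assms(1) by (auto simp: coprime_iff_gcd_eq_1)
  have "(x [^] c) [^] u = (x [^] p) [^] v \<otimes> x"
    using x_closed by (simp add: nat_pow_pow nat_pow_mult uv flip: nat_pow_Suc2)
  then have "x = (x [^] c) [^] int u"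
    using x_pow x_closed by (simp add: int_pow_int)
  then have "x \<in> N" using subgroup_int_pow_closed[OF subgroup_N xc] by metis
  moreover have "y \<in> N" using generate.incl[of y "{y}"] by simp
  ultimately have "carrier G \<subseteq> N"
    using generated generate_subgroup_incl[OF _ subgroup_N, of "{x, y}"] by simp
  then have "p * m \<le> m" using card_mono[OF finite_kernel] card_G card_N by metis
  then show False using p_gt_1 m_pos by simp
qed

lemma x_notin_N: "x \<notin> N"
  using x_pow_notin_N[of 1] p_gt_1 x_closed by simp

lemma product_one_free_extremal:
  "product_one_free G (replicate_mset (m - 1) y + replicate_mset (p - 1) x)"
  (is "product_one_free G ?S")
  unfolding product_one_free_iff_one_notin_subsequence_products subsequence_products_def
proof clarify
  fix xs assume xs: "xs \<noteq> []" "mset xs \<subseteq># ?S" and one: "\<one> = list_prod G xs"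
  have "y \<in> N" using generate.incl[of y "{y}"] by simp
  then have "x \<noteq> y" using x_notin_N by blast
  have set_xs: "set xs \<subseteq> {x, y}"
    using set_mset_mono[OF xs(2)] by (auto split: if_splits)
  define c where "c = count (mset xs) x"
  have "c \<le> p - 1"
    using mset_subset_eq_count[OF xs(2), of x] \<open>x \<noteq> y\<close> unfolding c_def by simp
  have "\<one> \<in> N #> x [^] c"
    using normal.list_prod_mem_rcos_count[OF normal_N x_closed] set_xs \<open>y \<in> N\<close> one
    unfolding c_def by (metis insert_mono subset_trans empty_subsetI insert_subset)
  then have "\<one> \<otimes> inv (x [^] c) \<in> N"
    by (rule subgroup.rcos_module_imp[OF subgroup_N is_group nat_pow_closed[OF x_closed]])
  then have "inv (x [^] c) \<in> N" using x_closed by simp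
  then have "x [^] c \<in> N"
    using subgroup.m_inv_closed[OF subgroup_N] x_closed by fastforce
  then have "c = 0" using x_pow_notin_N \<open>c \<le> p - 1\<close> p_gt_1 by fastforce
  then have "set xs \<subseteq> {y}" using set_xs unfolding c_def by (auto simp: count_eq_zero_iff)
  then have xs_rep: "xs = replicate (length xs) y"
    by (intro replicate_length_same[symmetric]) blast
  then have "mset xs = replicate_mset (length xs) y" by (metis mset_replicate)
  then have "length xs \<le> m - 1"
    using mset_subset_eq_count[OF xs(2), of y] \<open>x \<noteq> y\<close> by simp
  moreover have "y [^] length xs = \<one>"
    using one xs_rep list_prod_replicate[OF y_closed] by metis
  then have "m dvd length xs" using pow_eq_id[OF y_closed] ord_y by simp
  ultimately show False using xs(1) m_pos by (auto dest: dvd_imp_le)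
qed

theorem small_davenport_eq: "small_davenport G = m + p - 2"
  unfolding small_davenport_def
proof (rule Greatest_equality)
  let ?S = "replicate_mset (m - 1) y + replicate_mset (p - 1) x"
  have "set_mset ?S \<subseteq> carrier G" "size ?S = m + p - 2"
    using x_closed y_closed m_pos p_gt_1 by auto
  then show "\<exists>S. set_mset S \<subseteq> carrier G \<and> size S = m + p - 2 \<and> product_one_free G S"
    using product_one_free_extremal by blast
  show "l \<le> m + p - 2" if "\<exists>S. set_mset S \<subseteq> carrier G \<and> size S = l \<and> product_one_free G S" for l
    using that product_one_free_size_le by blast
qed

end

theorem proposition3p5:
  fixes G :: "('a, 'b) monoid_scheme" and p m :: nat and r :: int and x y :: 'a
  assumes "group G"
    and "prime p" and "m \<ge> 1" and "[r ^ p = 1] (mod int m)"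
    and "x \<in> carrier G" and "y \<in> carrier G"
    and "generate G {x, y} = carrier G"
    and "x [^]\<^bsub>G\<^esub> p = \<one>\<^bsub>G\<^esub>" and "y [^]\<^bsub>G\<^esub> m = \<one>\<^bsub>G\<^esub>"
    and "inv\<^bsub>G\<^esub> x \<otimes>\<^bsub>G\<^esub> y \<otimes>\<^bsub>G\<^esub> x = y [^]\<^bsub>G\<^esub> r"
    and "finite (carrier G)" and "card (carrier G) = p * m"
    and "\<forall>q. prime q \<and> q dvd card (carrier G) \<longrightarrow> p \<le> q"
    and "gcd (int p * (r - 1)) (int m) = 1"
  shows "small_davenport G = m + p - 2"
proof -
  have "coprime (r - 1) (int m)"
    using assms(14) by (simp add: coprime_iff_gcd_eq_1[symmetric])
  with assms have "metacyclic G p m r x y"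
    by (intro metacyclic.intro metacyclic_axioms.intro) auto
  then show ?thesis by (rule metacyclic.small_davenport_eq)
qed

end
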